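(* Let $\Omega=(a_1,b_1)\times\cdots\times(a_n,b_n)\subset\mathbb{R}^n$ be a bounded box with admissible mesh size vector $h$. (i) The first eigenvalue of $-\Delta_h$ on $\Omega_h$ with zero Dirichlet boundary conditions on $\partial\Omega_h$ is simple and equals $$\lambda_{1,h}=\sum_{i=1}^n\frac{4}{h_i^2}\sin^2\Big(\frac{\pi h_i}{2(b_i-a_i)}\Big)<\sum_{i=1}^n\frac{\pi^2}{(b_i-a_i)^2}=:\lambda_1,$$ with eigenfunction $\phi_{1,h}(x)=\prod_{i=1}^n\sin\frac{\pi(x_i-a_i)}{b_i-a_i}>0$ for $x\in\Omega_h$. (ii) Let $t>0$ be such that $\sum_{x\in\Omega_h}t\,\phi_{1,h}(x)\,\mathbf{h}=1$. Then $t\,\phi_{1,h}(x)\ge\frac{2^n}{|\Omega|^2}\operatorname{dist}(x,\partial\Omega_h)^n$ for all $x\in\Omega_h$.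
   Context: Admissible mesh: $h=(h_1,\dots,h_n)$, $h_i>0$, $a_i=k_ih_i$, $b_i=l_ih_i$, $k_i,l_i\in\mathbb{Z}$, $l_i-k_i>1$. $\mathbb{R}^n_h=\{(h_1z_1,\dots,h_nz_n):z_i\in\mathbb{Z}\}$, $\Omega_h=\Omega\cap\mathbb{R}^n_h$, $\partial\Omega_h=\partial\Omega\cap\mathbb{R}^n_h$, $\mathbf{h}=h_1\cdots h_n$, $|\Omega|=\prod_i(b_i-a_i)$. $\Delta_hu(x)=\sum_i\frac{u(x+h_ie_i)-2u(x)+u(x-h_ie_i)}{h_i^2}$. $\operatorname{dist}(x,\partial\Omega_h)$ is the Euclidean distance from $x$ to the set $\partial\Omega_h$. *)

theory Defs
  imports "HOL-Analysis.Analysis"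
begin

text \<open>Points of R^n are vectors of type real^'n; the dimension is n = CARD('n).
  The box Omega = (a_1,b_1) x ... x (a_n,b_n) is the open box  box a b.\<close>

definition admissible_mesh :: "real^'n \<Rightarrow> real^'n \<Rightarrow> real^'n \<Rightarrow> bool" where
  "admissible_mesh a b h \<longleftrightarrow>
     (\<forall>i. h$i > 0 \<and> (\<exists>k l :: int. a$i = of_int k * h$i \<and> b$i = of_int l * h$i \<and> l - k > 1))"

definition grid :: "real^'n \<Rightarrow> (real^'n) set" where
  "grid h = {x. \<forall>i. \<exists>z::int. x$i = h$i * of_int z}"

definition Omega_h :: "real^'n \<Rightarrow> real^'n \<Rightarrow> real^'n \<Rightarrow> (real^'n) set" where
  "Omega_h a b h = box a b \<inter> grid h"

definition bdry_h :: "real^'n \<Rightarrow> real^'n \<Rightarrow> real^'n \<Rightarrow> (real^'n) set" where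
  "bdry_h a b h = frontier (box a b) \<inter> grid h"

definition disc_lap :: "real^'n \<Rightarrow> (real^'n \<Rightarrow> real) \<Rightarrow> real^'n \<Rightarrow> real" where
  "disc_lap h u x = (\<Sum>i\<in>UNIV. (u (x + h$i *\<^sub>R axis i 1) - 2 * u x + u (x - h$i *\<^sub>R axis i 1)) / (h$i)^2)"

definition dir_eigenfun :: "real^'n \<Rightarrow> real^'n \<Rightarrow> real^'n \<Rightarrow> real \<Rightarrow> (real^'n \<Rightarrow> real) \<Rightarrow> bool" where
  "dir_eigenfun a b h lam u \<longleftrightarrow>
     (\<forall>x\<in>bdry_h a b h. u x = 0) \<and> (\<exists>x\<in>Omega_h a b h. u x \<noteq> 0) \<and>
     (\<forall>x\<in>Omega_h a b h. - disc_lap h u x = lam * u x)"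

definition dir_eigenvalue :: "real^'n \<Rightarrow> real^'n \<Rightarrow> real^'n \<Rightarrow> real \<Rightarrow> bool" where
  "dir_eigenvalue a b h lam \<longleftrightarrow> (\<exists>u. dir_eigenfun a b h lam u)"

definition first_simple_eigen :: "real^'n \<Rightarrow> real^'n \<Rightarrow> real^'n \<Rightarrow> real \<Rightarrow> (real^'n \<Rightarrow> real) \<Rightarrow> bool" where
  "first_simple_eigen a b h lam phi \<longleftrightarrow>
     dir_eigenfun a b h lam phi \<and>
     (\<forall>mu. dir_eigenvalue a b h mu \<longrightarrow> lam \<le> mu) \<and>
     (\<forall>u. dir_eigenfun a b h lam u \<longrightarrow> (\<exists>c. \<forall>x\<in>Omega_h a b h. u x = c * phi x))"

definition phi1 :: "real^'n \<Rightarrow> real^'n \<Rightarrow> real^'n \<Rightarrow> real" where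
  "phi1 a b x = (\<Prod>i\<in>UNIV. sin (pi * (x$i - a$i) / (b$i - a$i)))"

end

theory Submission
  imports Defs
begin

text \<open>The eigenfunction separates into one-dimensional sine modes, each an eigenvector of the
  second difference quotient, so \<open>-\<Delta>\<^sub>h \<phi> = \<lambda>\<^sub>1\<^sub>,\<^sub>h \<phi>\<close>; and \<open>\<lambda>\<^sub>1\<^sub>,\<^sub>h < \<lambda>\<^sub>1\<close> because \<open>sin y < y\<close>.
  Minimality and simplicity come from comparing an eigenfunction \<open>u\<close> with multiples of the
  positive function \<open>\<phi>\<close>: at a grid point where \<open>u/\<phi>\<close> is maximal, \<open>M\<phi>\<close> touches \<open>u\<close> from above,
  so \<open>\<Delta>\<^sub>h u \<le> M \<Delta>\<^sub>h \<phi>\<close> there, which forces \<open>\<lambda>\<^sub>1\<^sub>,\<^sub>h \<le> \<mu>\<close>. For \<open>\<mu> = \<lambda>\<^sub>1\<^sub>,\<^sub>h\<close> the nonnegative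
  eigenfunction \<open>M\<phi> - u\<close> vanishes at that point, hence at its lattice neighbours, hence (the grid
  being connected by lattice steps) everywhere.
  For (ii), \<open>\<Sum> \<phi> \<^bold>h \<le> |\<Omega>|\<close> gives \<open>t \<ge> 1/|\<Omega>|\<close>, and Jordan's inequality
  \<open>sin (\<pi>s) \<ge> 2 min s (1 - s)\<close> bounds \<open>\<phi> x\<close> below by \<open>(2 dist(x, \<partial>\<Omega>\<^sub>h))\<^sup>n / |\<Omega>|\<close>.\<close>

section \<open>Grid geometry\<close>

lemma axis_component [simp]: "axis i c $ j = (if j = i then c else 0)"
  by (simp add: axis_def)

lemma admissible_mesh_pos: "admissible_mesh a b h \<Longrightarrow> 0 < h$i"
  by (simp add: admissible_mesh_def)

lemma admissible_mesh_indices: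
  assumes "admissible_mesh a b h"
  obtains k l :: "'n::finite \<Rightarrow> int"
  where "\<And>i. a$i = of_int (k i) * h$i" "\<And>i. b$i = of_int (l i) * h$i" "\<And>i. l i - k i > 1"
  using assms unfolding admissible_mesh_def by metis

lemma admissible_mesh_grid:
  assumes "admissible_mesh a b h"
  shows "a \<in> grid h" "b \<in> grid h"
  using assms by (fastforce simp: admissible_mesh_def grid_def mult.commute)+

lemma admissible_mesh_width:
  assumes "admissible_mesh a b h"
  shows "2 * h$i \<le> b$i - a$i"
proof -
  obtain k l :: int where kl: "a$i = k * h$i" "b$i = l * h$i" "l - k > 1" and h: "0 < h$i"
    using assms unfolding admissible_mesh_def by blast
  have "2 * h$i \<le> of_int (l - k) * h$i"
    using kl(3) h by (intro mult_right_mono) auto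
  then show ?thesis
    using kl(1,2) by (simp add: algebra_simps)
qed

lemma admissible_mesh_less: "admissible_mesh a b h \<Longrightarrow> a$i < b$i"
  using admissible_mesh_width[of a b h i] admissible_mesh_pos[of a b h i] by linarith

lemma mult_of_int_step:
  fixes c :: real
  assumes "0 < c" "p = c * of_int m" "q = c * of_int n" "p < q"
  shows "p + c \<le> q"
proof -
  have "m < n"
    using assms by (simp add: mult_less_cancel_left_pos)
  then have "c * (of_int m + 1) \<le> c * of_int n"
    using assms(1) by (intro mult_left_mono) auto
  then show ?thesis
    using assms(2,3) by (simp add: algebra_simps)
qed

lemma grid_self: "h \<in> grid h"
  by (auto simp: grid_def intro: exI[of _ 1])

lemma grid_add:
  assumes "x \<in> grid h" "y \<in> grid h"
  shows "x + y \<in> grid h"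
proof -
  have "\<exists>z::int. (x + y)$i = h$i * of_int z" for i
  proof -
    obtain m n :: int where "x$i = h$i * m" "y$i = h$i * n"
      using assms unfolding grid_def by blast
    then show ?thesis
      by (intro exI[of _ "m + n"]) (simp add: distrib_left)
  qed
  then show ?thesis
    by (simp add: grid_def)
qed

lemma grid_diff:
  assumes "x \<in> grid h" "y \<in> grid h"
  shows "x - y \<in> grid h"
proof -
  have "\<exists>z::int. (x - y)$i = h$i * of_int z" for i
  proof -
    obtain m n :: int where "x$i = h$i * m" "y$i = h$i * n"
      using assms unfolding grid_def by blast
    then show ?thesis
      by (intro exI[of _ "m - n"]) (simp add: right_diff_distrib)
  qed
  then show ?thesis
    by (simp add: grid_def)
qed

lemma grid_component_axis:
  assumes "y \<in> grid h"
  shows "y$i *\<^sub>R axis i 1 \<in> grid h"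
proof -
  have "\<exists>z::int. (y$i *\<^sub>R axis i 1)$j = h$j * of_int z" for j
    using assms by (cases "j = i") (auto simp: grid_def axis_def intro: exI[of _ 0])
  then show ?thesis
    by (simp add: grid_def)
qed

lemma grid_neighbours:
  assumes "x \<in> grid h"
  shows "x + h$i *\<^sub>R axis i 1 \<in> grid h" "x - h$i *\<^sub>R axis i 1 \<in> grid h"
  using grid_add[OF assms] grid_diff[OF assms] grid_component_axis[OF grid_self] by auto

lemma bdry_h_eq:
  assumes "\<And>i. a$i < b$i"
  shows "bdry_h a b h = (cbox a b - box a b) \<inter> grid h"
proof -
  have "box a b \<noteq> {}"
    using assms by (auto simp: interval_eq_empty_cart not_le)
  then show ?thesis
    by (simp add: bdry_h_def frontier_def interior_open[OF open_box])
qed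

lemma Omega_h_neighbours:
  assumes adm: "admissible_mesh a b h" and x: "x \<in> Omega_h a b h"
  shows "x + h$i *\<^sub>R axis i 1 \<in> Omega_h a b h \<union> bdry_h a b h"
        "x - h$i *\<^sub>R axis i 1 \<in> Omega_h a b h \<union> bdry_h a b h"
proof -
  have xb: "\<And>j. a$j < x$j \<and> x$j < b$j" and xg: "x \<in> grid h"
    using x by (auto simp: Omega_h_def mem_box_cart)
  obtain k m l :: int where "a$i = h$i * k" "x$i = h$i * m" "b$i = h$i * l"
    using admissible_mesh_grid[OF adm] xg unfolding grid_def by blast
  moreover have h: "0 < h$i"
    by (rule admissible_mesh_pos[OF adm])
  ultimately have "x$i + h$i \<le> b$i" "a$i + h$i \<le> x$i"
    using mult_of_int_step xb by blast+
  then have "a$j \<le> (x + h$i *\<^sub>R axis i 1)$j \<and> (x + h$i *\<^sub>R axis i 1)$j \<le> b$j"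
            "a$j \<le> (x - h$i *\<^sub>R axis i 1)$j \<and> (x - h$i *\<^sub>R axis i 1)$j \<le> b$j" for j
    using xb[of j] h by (auto simp: less_imp_le)
  then have "x + h$i *\<^sub>R axis i 1 \<in> cbox a b" "x - h$i *\<^sub>R axis i 1 \<in> cbox a b"
    by (simp_all add: mem_box_cart)
  then show "x + h$i *\<^sub>R axis i 1 \<in> Omega_h a b h \<union> bdry_h a b h"
            "x - h$i *\<^sub>R axis i 1 \<in> Omega_h a b h \<union> bdry_h a b h"
    using grid_neighbours[OF xg, of i] admissible_mesh_less[OF adm]
    by (auto simp: bdry_h_eq Omega_h_def)
qed

lemma Omega_h_corner:
  assumes adm: "admissible_mesh a b h"
  shows "a + h \<in> Omega_h a b h"
proof -
  have "a$i < a$i + h$i \<and> a$i + h$i < b$i" for i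
    using admissible_mesh_pos[OF adm, of i] admissible_mesh_width[OF adm, of i] by linarith
  then show ?thesis
    using grid_add[OF admissible_mesh_grid(1)[OF adm] grid_self]
    by (auto simp: Omega_h_def mem_box_cart)
qed

lemma Omega_h_subset_lattice:
  assumes adm: "admissible_mesh a b h"
    and k: "\<And>i. a$i = of_int (k i) * h$i" and l: "\<And>i. b$i = of_int (l i) * h$i"
  shows "Omega_h a b h \<subseteq> vec_lambda ` (PiE UNIV (\<lambda>i. (\<lambda>z::int. h$i * of_int z) ` {k i + 1 .. l i - 1}))"
proof
  fix x assume x: "x \<in> Omega_h a b h"
  have "x$i \<in> (\<lambda>z::int. h$i * of_int z) ` {k i + 1 .. l i - 1}" for i
  proof -
    obtain z :: int where z: "x$i = h$i * of_int z"
      using x unfolding Omega_h_def grid_def by blast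
    have "a$i < x$i" "x$i < b$i"
      using x by (auto simp: Omega_h_def mem_box_cart)
    then have "h$i * k i < h$i * z" "h$i * z < h$i * l i"
      using k[of i] l[of i] z by (simp_all add: mult.commute)
    then have "k i < z" "z < l i"
      using admissible_mesh_pos[OF adm, of i] by (simp_all add: mult_less_cancel_left_pos)
    then show ?thesis
      using z by (intro image_eqI[of _ _ z]) auto
  qed
  then have "vec_nth x \<in> PiE UNIV (\<lambda>i. (\<lambda>z::int. h$i * of_int z) ` {k i + 1 .. l i - 1})"
    by (intro PiE_I) auto
  then have "vec_lambda (vec_nth x) \<in> vec_lambda ` (PiE UNIV (\<lambda>i. (\<lambda>z::int. h$i * of_int z) ` {k i + 1 .. l i - 1}))"
    by (rule imageI)
  then show "x \<in> vec_lambda ` (PiE UNIV (\<lambda>i. (\<lambda>z::int. h$i * of_int z) ` {k i + 1 .. l i - 1}))"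
    by simp
qed

lemma finite_Omega_h_card_le:
  assumes adm: "admissible_mesh a b h"
  shows "finite (Omega_h a b h)"
    and "real (card (Omega_h a b h)) * (\<Prod>i\<in>UNIV. h$i) \<le> (\<Prod>i\<in>UNIV. b$i - a$i)"
proof -
  obtain k l where kl: "\<And>i. a$i = of_int (k i) * h$i" "\<And>i. b$i = of_int (l i) * h$i" "\<And>i. l i - k i > 1"
    using admissible_mesh_indices[OF adm] by blast
  let ?S = "\<lambda>i. (\<lambda>z::int. h$i * of_int z) ` {k i + 1 .. l i - 1}"
  have sub: "Omega_h a b h \<subseteq> vec_lambda ` (PiE UNIV ?S)"
    by (rule Omega_h_subset_lattice[OF adm kl(1,2)])
  have fin: "finite (PiE UNIV ?S)"
    by (intro finite_PiE) auto
  show "finite (Omega_h a b h)"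
    using sub fin finite_subset by blast
  have "card (Omega_h a b h) \<le> card (vec_lambda ` (PiE UNIV ?S))"
    using sub fin by (intro card_mono) auto
  also have "\<dots> \<le> card (PiE UNIV ?S)"
    by (rule card_image_le[OF fin])
  also have "\<dots> = (\<Prod>i\<in>UNIV. card (?S i))"
    by (simp add: card_PiE)
  also have "\<dots> \<le> (\<Prod>i\<in>UNIV. nat (l i - k i - 1))"
    by (intro prod_mono conjI) (auto intro!: order.trans[OF card_image_le] simp: card_atLeastAtMost_int)
  finally have "real (card (Omega_h a b h)) * (\<Prod>i\<in>UNIV. h$i)
      \<le> (\<Prod>i\<in>UNIV. real (nat (l i - k i - 1))) * (\<Prod>i\<in>UNIV. h$i)"
    using admissible_mesh_pos[OF adm]
    by (intro mult_right_mono prod_nonneg) (auto simp flip: of_nat_prod intro: less_imp_le)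
  also have "\<dots> = (\<Prod>i\<in>UNIV. real (nat (l i - k i - 1)) * h$i)"
    by (simp add: prod.distrib)
  also have "\<dots> \<le> (\<Prod>i\<in>UNIV. b$i - a$i)"
  proof (intro prod_mono conjI)
    fix i
    have h: "0 < h$i"
      by (rule admissible_mesh_pos[OF adm])
    show "0 \<le> real (nat (l i - k i - 1)) * h$i"
      using h by simp
    have "real (nat (l i - k i - 1)) * h$i = b$i - a$i - h$i"
      using kl(1,2,3)[of i] by (simp add: algebra_simps)
    then show "real (nat (l i - k i - 1)) * h$i \<le> b$i - a$i"
      using h by linarith
  qed
  finally show "real (card (Omega_h a b h)) * (\<Prod>i\<in>UNIV. h$i) \<le> (\<Prod>i\<in>UNIV. b$i - a$i)" .
qed

lemma Omega_h_step_towards: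
  assumes h: "\<And>j. 0 < h$j" and x: "x \<in> Omega_h a b h" and y: "y \<in> Omega_h a b h"
    and ne: "x$i \<noteq> y$i"
  obtains x' where "x' \<in> {x + h$i *\<^sub>R axis i 1, x - h$i *\<^sub>R axis i 1}" "x' \<in> Omega_h a b h"
    "\<bar>x'$i - y$i\<bar> = \<bar>x$i - y$i\<bar> - h$i"
proof -
  have xb: "\<And>j. a$j < x$j \<and> x$j < b$j" and xg: "x \<in> grid h"
    and yb: "\<And>j. a$j < y$j \<and> y$j < b$j"
    using x y by (auto simp: Omega_h_def mem_box_cart)
  obtain m n :: int where mn: "x$i = h$i * m" "y$i = h$i * n"
    using x y unfolding Omega_h_def grid_def by blast
  show ?thesis
  proof (cases "x$i < y$i")
    case True
    then have "x$i + h$i \<le> y$i"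
      using mult_of_int_step[OF h mn] by blast
    then have "a$j < (x + h$i *\<^sub>R axis i 1)$j \<and> (x + h$i *\<^sub>R axis i 1)$j < b$j" for j
      using xb[of j] yb[of j] h[of i] by auto
    then show ?thesis
      using \<open>x$i + h$i \<le> y$i\<close> h[of i] grid_neighbours[OF xg, of i]
      by (intro that[of "x + h$i *\<^sub>R axis i 1"]) (auto simp: Omega_h_def mem_box_cart)
  next
    case False
    then have "y$i + h$i \<le> x$i"
      using mult_of_int_step[OF h mn(2,1)] ne by fastforce
    then have "a$j < (x - h$i *\<^sub>R axis i 1)$j \<and> (x - h$i *\<^sub>R axis i 1)$j < b$j" for j
      using xb[of j] yb[of j] h[of i] by auto
    then show ?thesis
      using \<open>y$i + h$i \<le> x$i\<close> h[of i] grid_neighbours[OF xg, of i]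
      by (intro that[of "x - h$i *\<^sub>R axis i 1"]) (auto simp: Omega_h_def mem_box_cart)
  qed
qed

lemma Omega_h_neighbour_induct:
  assumes h: "\<And>i. 0 < h$i"
    and step: "\<And>x x' i. x \<in> Omega_h a b h \<Longrightarrow> P x \<Longrightarrow>
                 x' \<in> {x + h$i *\<^sub>R axis i 1, x - h$i *\<^sub>R axis i 1} \<Longrightarrow> x' \<in> Omega_h a b h \<Longrightarrow> P x'"
    and x0: "x0 \<in> Omega_h a b h" "P x0" and y: "y \<in> Omega_h a b h"
  shows "P y"
proof -
  define D where "D x = (\<Sum>j\<in>UNIV. \<bar>x$j - y$j\<bar> / h$j)" for x
  have D_nonneg: "0 \<le> \<bar>x$j - y$j\<bar> / h$j" for x j
    using h by (simp add: less_imp_le)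
  have "P y" if "x \<in> Omega_h a b h" "P x" "D x \<le> real n" for n x
    using that
  proof (induction n arbitrary: x)
    case 0
    moreover have "0 \<le> D x"
      unfolding D_def by (intro sum_nonneg D_nonneg)
    ultimately have "D x = 0"
      by linarith
    then have "\<forall>j. x$j = y$j \<or> h$j = 0"
      using sum_nonneg_eq_0_iff[of UNIV "\<lambda>j. \<bar>x$j - y$j\<bar> / h$j"] D_nonneg by (simp add: D_def)
    then have "x = y"
      using h by (simp add: vec_eq_iff) (metis less_irrefl)
    then show ?case
      using 0 by simp
  next
    case (Suc n)
    show ?case
    proof (cases "x = y")
      case False
      then obtain i where "x$i \<noteq> y$i"
        by (auto simp: vec_eq_iff)
      then obtain x' where x': "x' \<in> {x + h$i *\<^sub>R axis i 1, x - h$i *\<^sub>R axis i 1}"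
        "x' \<in> Omega_h a b h" "\<bar>x'$i - y$i\<bar> = \<bar>x$i - y$i\<bar> - h$i"
        using Omega_h_step_towards[OF h Suc.prems(1) y] by blast
      have "\<bar>x'$j - y$j\<bar> / h$j = \<bar>x$j - y$j\<bar> / h$j - (if j = i then 1 else 0)" for j
        using x' h[of i] by (cases "j = i") (auto simp: diff_divide_distrib)
      then have "D x' = D x - 1"
        by (simp add: D_def sum_subtractf)
      then show ?thesis
        using Suc.IH[OF x'(2) step[OF Suc.prems(1,2) x'(1,2)]] Suc.prems(3) by simp
    qed (use Suc.prems in simp)
  qed
  then show ?thesis
    using x0 real_arch_simple by blast
qed

section \<open>Products of sine modes\<close>

lemma prod_coordinates_remove:
  "(\<Prod>j\<in>UNIV. g j (x$j)) = g i (x$i) * (\<Prod>j\<in>-{i}. g j (x$j))"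
  by (subst prod.remove[of UNIV i]) (auto simp: Compl_eq_Diff_UNIV)

lemma disc_lap_separable:
  assumes "\<And>i t. (g i (t + h$i) - 2 * g i t + g i (t - h$i)) / (h$i)^2 = - \<mu> i * g i t"
  shows "- disc_lap h (\<lambda>x. \<Prod>j\<in>UNIV. g j (x$j)) x = (\<Sum>i\<in>UNIV. \<mu> i) * (\<Prod>j\<in>UNIV. g j (x$j))"
proof -
  define P where "P y = (\<Prod>j\<in>UNIV. g j (y$j))" for y
  define R where "R i = (\<Prod>j\<in>-{i}. g j (x$j))" for i
  have shift: "P (x + c *\<^sub>R axis i 1) = g i (x$i + c) * R i"
              "P (x - c *\<^sub>R axis i 1) = g i (x$i - c) * R i" for c i
    unfolding P_def R_def by (subst prod_coordinates_remove[of _ _ i], auto intro!: prod.cong)+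
  have centre: "P x = g i (x$i) * R i" for i
    unfolding P_def R_def by (rule prod_coordinates_remove)
  have "(P (x + h$i *\<^sub>R axis i 1) - 2 * P x + P (x - h$i *\<^sub>R axis i 1)) / (h$i)^2 = - \<mu> i * P x" for i
  proof -
    have "P (x + h$i *\<^sub>R axis i 1) - 2 * P x + P (x - h$i *\<^sub>R axis i 1)
        = (g i (x$i + h$i) - 2 * g i (x$i) + g i (x$i - h$i)) * R i"
      by (simp only: shift centre[of i] algebra_simps)
    then show ?thesis
      by (simp only: times_divide_eq_left[symmetric] assms centre[of i] mult.assoc)
  qed
  moreover have "(\<lambda>x. \<Prod>j\<in>UNIV. g j (x$j)) = P"
    by (simp add: P_def fun_eq_iff)
  ultimately show ?thesis
    by (simp add: disc_lap_def sum_distrib_right sum_negf P_def)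
qed

lemma sin_second_difference:
  "sin (t + 2 * s) - 2 * sin t + sin (t - 2 * s) = - 4 * (sin s)^2 * sin (t::real)"
proof -
  have cos2: "cos (2 * s) = 1 - 2 * (sin s)^2"
    by (rule cos_double_sin)
  show ?thesis
    unfolding sin_add sin_diff cos2 by (simp add: algebra_simps)
qed

lemma sin_mode_second_difference:
  fixes c L t a :: real
  shows "(sin (pi * (t + c - a) / L) - 2 * sin (pi * (t - a) / L) + sin (pi * (t - c - a) / L)) / c^2
           = - (4 / c^2 * (sin (pi * c / (2 * L)))^2) * sin (pi * (t - a) / L)"
proof -
  have "2 * (pi * c / (2 * L)) = pi * c / L"
    by simp
  moreover have "pi * (t + c - a) / L = pi * (t - a) / L + pi * c / L"
                "pi * (t - c - a) / L = pi * (t - a) / L - pi * c / L"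
    by (simp_all add: add_divide_distrib diff_divide_distrib algebra_simps)
  ultimately show ?thesis
    using sin_second_difference[of "pi * (t - a) / L" "pi * c / (2 * L)"] by simp
qed

abbreviation disc_lambda1 :: "real^'n \<Rightarrow> real^'n \<Rightarrow> real^'n \<Rightarrow> real" where
  "disc_lambda1 a b h \<equiv> \<Sum>i\<in>UNIV. 4 / (h$i)^2 * (sin (pi * h$i / (2 * (b$i - a$i))))^2"

lemma phi1_disc_lap: "disc_lap h (phi1 a b) x = - (disc_lambda1 a b h * phi1 a b x)"
proof -
  have "phi1 a b = (\<lambda>x. \<Prod>j\<in>UNIV. sin (pi * (x$j - a$j) / (b$j - a$j)))"
    by (simp add: phi1_def fun_eq_iff)
  moreover have "- disc_lap h (\<lambda>x. \<Prod>j\<in>UNIV. sin (pi * (x$j - a$j) / (b$j - a$j))) x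
      = disc_lambda1 a b h * (\<Prod>j\<in>UNIV. sin (pi * (x$j - a$j) / (b$j - a$j)))"
    by (rule disc_lap_separable[where g = "\<lambda>j t. sin (pi * (t - a$j) / (b$j - a$j))"])
       (rule sin_mode_second_difference)
  ultimately show ?thesis
    by (simp add: minus_equation_iff)
qed

lemma phi1_pos:
  assumes "x \<in> box a b"
  shows "0 < phi1 a b x"
proof -
  have "0 < (x$i - a$i) / (b$i - a$i)" "(x$i - a$i) / (b$i - a$i) < 1" for i
    using assms[unfolded mem_box_cart, rule_format, of i] by (auto simp: divide_less_eq_1)
  moreover have "0 < sin (pi * q)" if "0 < q" "q < 1" for q :: real
    using that by (intro sin_gt_zero) auto
  ultimately have "0 < sin (pi * ((x$i - a$i) / (b$i - a$i)))" for i
    by blast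
  then show ?thesis
    unfolding phi1_def by (intro prod_pos) simp
qed

lemma abs_phi1_le_1: "\<bar>phi1 a b x\<bar> \<le> 1"
  unfolding phi1_def abs_prod by (intro prod_le_1) auto

lemma phi1_frontier:
  assumes "x \<in> frontier (box a b)"
  shows "phi1 a b x = 0"
proof -
  have "box a b \<noteq> {}"
    using assms by auto
  then have "x \<in> cbox a b" "x \<notin> box a b"
    using assms by (auto simp: frontier_def interior_open[OF open_box])
  then obtain i where "x$i = a$i \<or> x$i = b$i"
    unfolding mem_box_cart by (metis order_less_le)
  then have "sin (pi * (x$i - a$i) / (b$i - a$i)) = 0"
    by (cases "b$i = a$i") auto
  then show ?thesis
    unfolding phi1_def by (intro prod_zero) auto
qed

section \<open>Comparison with multiples of the sine product\<close>

lemma phi1_pos_Omega_h: "x \<in> Omega_h a b h \<Longrightarrow> 0 < phi1 a b x"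
  by (simp add: Omega_h_def phi1_pos)

lemma phi1_bdry_h: "x \<in> bdry_h a b h \<Longrightarrow> phi1 a b x = 0"
  by (simp add: bdry_h_def phi1_frontier)

lemma disc_lap_diff: "disc_lap h (\<lambda>x. f x - g x) x = disc_lap h f x - disc_lap h g x"
  unfolding disc_lap_def by (simp add: sum_subtractf[symmetric] diff_divide_distrib[symmetric] algebra_simps)

lemma disc_lap_cmult: "disc_lap h (\<lambda>x. c * f x) x = c * disc_lap h f x"
  unfolding disc_lap_def by (simp add: sum_distrib_left algebra_simps)

lemma dir_eigenfun_uminus: "dir_eigenfun a b h mu u \<Longrightarrow> dir_eigenfun a b h mu (\<lambda>x. - u x)"
  using disc_lap_cmult[of h "-1" u] by (auto simp: dir_eigenfun_def)

lemma disc_lap_le_at_contact: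
  assumes "\<And>i. 0 < h$i" and "u x = v x"
    and "\<And>i. u (x + h$i *\<^sub>R axis i 1) \<le> v (x + h$i *\<^sub>R axis i 1)"
    and "\<And>i. u (x - h$i *\<^sub>R axis i 1) \<le> v (x - h$i *\<^sub>R axis i 1)"
  shows "disc_lap h u x \<le> disc_lap h v x"
  unfolding disc_lap_def using assms by (intro sum_mono divide_right_mono) (auto intro: add_mono)

lemma disc_lap_zero_at_nonneg_min:
  assumes "\<And>j. 0 < h$j" and "v x = 0" and "disc_lap h v x = 0"
    and "\<And>j. 0 \<le> v (x + h$j *\<^sub>R axis j 1)" "\<And>j. 0 \<le> v (x - h$j *\<^sub>R axis j 1)"
  shows "v (x + h$i *\<^sub>R axis i 1) = 0 \<and> v (x - h$i *\<^sub>R axis i 1) = 0"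
proof -
  let ?f = "\<lambda>j. (v (x + h$j *\<^sub>R axis j 1) - 2 * v x + v (x - h$j *\<^sub>R axis j 1)) / (h$j)^2"
  have "\<And>j. 0 \<le> ?f j" "sum ?f UNIV = 0"
    using assms by (simp_all add: disc_lap_def)
  then have "?f i = 0"
    using sum_nonneg_eq_0_iff[of UNIV ?f] by simp
  then show ?thesis
    using assms(1)[of i] assms(2) assms(4)[of i] assms(5)[of i] by (simp add: add_nonneg_eq_0_iff)
qed

lemma phi1_contact_multiple:
  assumes adm: "admissible_mesh a b h" and bd: "\<forall>x\<in>bdry_h a b h. u x = 0"
  obtains x0 M where "x0 \<in> Omega_h a b h" "u x0 = M * phi1 a b x0"
    "\<And>y. y \<in> Omega_h a b h \<union> bdry_h a b h \<Longrightarrow> u y \<le> M * phi1 a b y"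
proof -
  let ?r = "\<lambda>y. u y / phi1 a b y"
  let ?M = "Max (?r ` Omega_h a b h)"
  have fin: "finite (?r ` Omega_h a b h)" "?r ` Omega_h a b h \<noteq> {}"
    using finite_Omega_h_card_le(1)[OF adm] Omega_h_corner[OF adm] by auto
  obtain x0 where x0: "x0 \<in> Omega_h a b h" "?r x0 = ?M"
    using Max_in[OF fin] by fastforce
  show ?thesis
  proof (rule that[OF x0(1)])
    show "u x0 = ?M * phi1 a b x0"
      using x0 phi1_pos_Omega_h[OF x0(1)] by (simp add: field_simps)
    fix y assume "y \<in> Omega_h a b h \<union> bdry_h a b h"
    then show "u y \<le> ?M * phi1 a b y"
    proof
      assume y: "y \<in> Omega_h a b h"
      then have "?r y \<le> ?M"
        using fin by simp
      then show ?thesis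
        using phi1_pos_Omega_h[OF y] by (simp add: pos_divide_le_eq)
    qed (simp add: bd phi1_bdry_h)
  qed
qed

lemma disc_lambda1_le_eigenvalue_pos:
  assumes adm: "admissible_mesh a b h" and u: "dir_eigenfun a b h mu u"
    and x: "x \<in> Omega_h a b h" "0 < u x"
  shows "disc_lambda1 a b h \<le> mu"
proof -
  have "\<forall>x\<in>bdry_h a b h. u x = 0"
    using u by (simp add: dir_eigenfun_def)
  then obtain x0 M where x0: "x0 \<in> Omega_h a b h" "u x0 = M * phi1 a b x0"
    and below: "\<And>y. y \<in> Omega_h a b h \<union> bdry_h a b h \<Longrightarrow> u y \<le> M * phi1 a b y"
    using phi1_contact_multiple[OF adm] by blast
  have "0 < M * phi1 a b x"
    using below[of x] x by auto
  then have "0 < M"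
    using phi1_pos_Omega_h[OF x(1)] by (simp add: zero_less_mult_iff)
  then have u0: "0 < u x0"
    using x0 phi1_pos_Omega_h[OF x0(1)] by simp
  have "disc_lap h u x0 \<le> disc_lap h (\<lambda>y. M * phi1 a b y) x0"
    using x0(2) below Omega_h_neighbours[OF adm x0(1)] admissible_mesh_pos[OF adm]
    by (intro disc_lap_le_at_contact) auto
  also have "\<dots> = - (disc_lambda1 a b h * u x0)"
    using x0(2) by (simp add: disc_lap_cmult phi1_disc_lap)
  moreover have "- disc_lap h u x0 = mu * u x0"
    using u x0(1) by (simp add: dir_eigenfun_def)
  ultimately have "disc_lambda1 a b h * u x0 \<le> mu * u x0"
    by linarith
  then show ?thesis
    using u0 by simp
qed

lemma disc_lambda1_le_eigenvalue:
  assumes adm: "admissible_mesh a b h" and u: "dir_eigenfun a b h mu u"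
  shows "disc_lambda1 a b h \<le> mu"
proof -
  obtain x where x: "x \<in> Omega_h a b h" "u x \<noteq> 0"
    using u by (auto simp: dir_eigenfun_def)
  show ?thesis
  proof (cases "0 < u x")
    case True
    then show ?thesis
      using disc_lambda1_le_eigenvalue_pos[OF adm u x(1)] by simp
  next
    case False
    then show ?thesis
      using disc_lambda1_le_eigenvalue_pos[OF adm dir_eigenfun_uminus[OF u] x(1)] x(2) by simp
  qed
qed

lemma dir_eigenfun_strong_min_principle:
  assumes adm: "admissible_mesh a b h"
    and nonneg: "\<And>y. y \<in> Omega_h a b h \<Longrightarrow> 0 \<le> v y"
    and bd: "\<And>y. y \<in> bdry_h a b h \<Longrightarrow> v y = 0"
    and eq: "\<And>y. y \<in> Omega_h a b h \<Longrightarrow> - disc_lap h v y = mu * v y"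
    and x0: "x0 \<in> Omega_h a b h" "v x0 = 0" and y: "y \<in> Omega_h a b h"
  shows "v y = 0"
proof (rule Omega_h_neighbour_induct[where P = "\<lambda>x. v x = 0", OF admissible_mesh_pos[OF adm] _ x0 y])
  have hpos: "\<And>j. 0 < h$j"
    using admissible_mesh_pos[OF adm] by blast
  have nn: "0 \<le> v z" if "z \<in> Omega_h a b h \<union> bdry_h a b h" for z
    using that nonneg bd by fastforce
  fix x x' i
  assume x: "x \<in> Omega_h a b h" "v x = 0" and x': "x' \<in> {x + h$i *\<^sub>R axis i 1, x - h$i *\<^sub>R axis i 1}"
  show "v x' = 0"
    using disc_lap_zero_at_nonneg_min[where h = h and v = v and x = x and i = i, OF hpos x(2)] eq[OF x(1)] x(2) x'
      nn[OF Omega_h_neighbours(1)[OF adm x(1)]] nn[OF Omega_h_neighbours(2)[OF adm x(1)]]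
    by auto
qed

lemma disc_lambda1_simple:
  assumes adm: "admissible_mesh a b h" and u: "dir_eigenfun a b h (disc_lambda1 a b h) u"
  shows "\<exists>c. \<forall>x\<in>Omega_h a b h. u x = c * phi1 a b x"
proof -
  have "\<forall>x\<in>bdry_h a b h. u x = 0"
    using u by (simp add: dir_eigenfun_def)
  then obtain x0 M where x0: "x0 \<in> Omega_h a b h" "u x0 = M * phi1 a b x0"
    and below: "\<And>y. y \<in> Omega_h a b h \<union> bdry_h a b h \<Longrightarrow> u y \<le> M * phi1 a b y"
    using phi1_contact_multiple[OF adm] by blast
  define v where "v = (\<lambda>x. M * phi1 a b x - u x)"
  have "v y = 0" if "y \<in> Omega_h a b h" for y
  proof (rule dir_eigenfun_strong_min_principle[OF adm _ _ _ x0(1) _ that])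
    show "0 \<le> v y" if "y \<in> Omega_h a b h" for y
      using below[of y] that by (simp add: v_def)
    show "v y = 0" if "y \<in> bdry_h a b h" for y
      using u that by (simp add: v_def dir_eigenfun_def phi1_bdry_h)
    show "- disc_lap h v y = disc_lambda1 a b h * v y" if "y \<in> Omega_h a b h" for y
    proof -
      have "- disc_lap h u y = disc_lambda1 a b h * u y"
        using u that by (simp add: dir_eigenfun_def)
      then show ?thesis
        by (simp add: v_def disc_lap_diff disc_lap_cmult phi1_disc_lap algebra_simps)
    qed
    show "v x0 = 0"
      using x0(2) by (simp add: v_def)
  qed
  then show ?thesis
    by (intro exI[of _ M]) (simp add: v_def)
qed

section \<open>The eigenvalue bound and the lower bound for the eigenfunction\<close>

lemma sin_less_self:
  fixes y :: real
  assumes "0 < y"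
  shows "sin y < y"
proof (cases "y < 2")
  case True
  let ?s = "sin (y/2)" and ?c = "cos (y/2)"
  have s: "0 < ?s"
    using assms True pi_gt3 by (intro sin_gt_zero) auto
  have "?c \<noteq> 1"
    using sin_cos_squared_add[of "y/2"] s by (auto simp: power2_eq_square)
  then have c: "?c < 1"
    using cos_le_one[of "y/2"] by linarith
  have "sin y = 2 * ?s * ?c"
    using sin_double[of "y/2"] by simp
  also have "\<dots> < 2 * ?s"
    using s c by simp
  also have "\<dots> \<le> y"
    using sin_x_le_x[of "y/2"] assms by simp
  finally show ?thesis .
next
  case False
  then show ?thesis
    using sin_le_one[of y] by linarith
qed

lemma disc_lambda1_less:
  assumes adm: "admissible_mesh a b h"
  shows "disc_lambda1 a b h < (\<Sum>i\<in>UNIV. pi^2 / (b$i - a$i)^2)"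
proof (rule sum_strict_mono)
  fix i
  define L where "L = b$i - a$i"
  define y where "y = pi * h$i / (2 * L)"
  have h: "0 < h$i" and L: "2 * h$i \<le> L"
    using admissible_mesh_pos[OF adm] admissible_mesh_width[OF adm] by (auto simp: L_def)
  have "0 < y"
    using h L by (simp add: y_def)
  moreover have "y \<le> pi / 2"
    using h L mult_left_le[of "h$i / L" "pi / 2"] by (simp add: y_def)
  ultimately have "(sin y)^2 < y^2"
    using sin_less_self[of y] sin_gt_zero[of y] by (intro power_strict_mono) auto
  then have "4 / (h$i)^2 * (sin y)^2 < 4 / (h$i)^2 * y^2"
    using h by (intro mult_strict_left_mono) auto
  also have "4 / (h$i)^2 * y^2 = pi^2 / L^2"
    using h L by (simp add: y_def power_divide power_mult_distrib)
  finally show "4 / (h$i)^2 * (sin (pi * h$i / (2 * (b$i - a$i))))^2 < pi^2 / (b$i - a$i)^2"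
    by (simp add: y_def L_def)
qed auto

lemma sin_half_pi_ge:
  fixes u :: real
  assumes "0 \<le> u" "u \<le> 1"
  shows "u \<le> sin (u * (pi/2))"
proof -
  have "convex_on {0..pi} (\<lambda>x. - sin x)"
    by (rule f''_ge0_imp_convex[where f' = "\<lambda>x. - cos x" and f'' = "\<lambda>x. sin x"])
       (auto intro!: derivative_eq_intros sin_ge_zero)
  then have "- sin ((1 - u) *\<^sub>R 0 + u *\<^sub>R (pi/2)) \<le> (1 - u) * (- sin 0) + u * (- sin (pi/2))"
    using assms by (intro convex_onD) auto
  then show ?thesis
    by (simp add: mult.commute)
qed

lemma sin_pi_ge_min:
  fixes s :: real
  assumes "0 \<le> s" "s \<le> 1"
  shows "2 * min s (1 - s) \<le> sin (pi * s)"
proof (cases "s \<le> 1/2")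
  case True
  then show ?thesis
    using sin_half_pi_ge[of "2 * s"] assms by (simp add: algebra_simps min_def)
next
  case False
  have "sin (pi * s) = sin (pi * (1 - s))"
    by (simp add: algebra_simps sin_diff)
  then show ?thesis
    using sin_half_pi_ge[of "2 * (1 - s)"] assms False by (simp add: algebra_simps min_def)
qed

lemma phi1_ge_power:
  fixes x :: "real^'n"
  assumes "x \<in> box a b" "0 \<le> d" "\<And>i. d \<le> x$i - a$i" "\<And>i. d \<le> b$i - x$i"
  shows "(2 * d) ^ CARD('n) / (\<Prod>i\<in>UNIV. b$i - a$i) \<le> phi1 a b x"
proof -
  have ab: "a$i < x$i" "x$i < b$i" for i
    using assms(1) by (auto simp: mem_box_cart)
  have "2 * d / (b$i - a$i) \<le> sin (pi * ((x$i - a$i) / (b$i - a$i)))" for i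
  proof -
    define s where "s = (x$i - a$i) / (b$i - a$i)"
    have "0 \<le> s" "s \<le> 1" "1 - s = (b$i - x$i) / (b$i - a$i)"
      using ab[of i] by (auto simp: s_def field_simps)
    moreover have "d / (b$i - a$i) \<le> s" "d / (b$i - a$i) \<le> (b$i - x$i) / (b$i - a$i)"
      using ab[of i] assms(3,4)[of i] by (auto simp: s_def divide_right_mono)
    ultimately have "2 * d / (b$i - a$i) \<le> 2 * min s (1 - s)"
      by simp
    also have "\<dots> \<le> sin (pi * s)"
      using sin_pi_ge_min \<open>0 \<le> s\<close> \<open>s \<le> 1\<close> by blast
    finally show ?thesis
      by (simp add: s_def)
  qed
  then have "(\<Prod>i\<in>UNIV. 2 * d / (b$i - a$i)) \<le> phi1 a b x"
    unfolding phi1_def using assms(2) ab by (intro prod_mono conjI divide_nonneg_pos) (auto intro: less_trans)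
  then show ?thesis
    by (simp add: prod_dividef)
qed

lemma bdry_h_axis_projection:
  assumes adm: "admissible_mesh a b h" and x: "x \<in> Omega_h a b h" and c: "c = a \<or> c = b"
  shows "x + (c$i - x$i) *\<^sub>R axis i 1 \<in> bdry_h a b h"
proof -
  have xb: "\<And>j. a$j < x$j \<and> x$j < b$j" and xg: "x \<in> grid h"
    using x by (auto simp: Omega_h_def mem_box_cart)
  have "(c - x)$i *\<^sub>R axis i 1 \<in> grid h"
    using c admissible_mesh_grid[OF adm] xg by (intro grid_component_axis grid_diff) auto
  then have "x + (c$i - x$i) *\<^sub>R axis i 1 \<in> grid h"
    using grid_add[OF xg] by simp
  moreover have "a$j \<le> (x + (c$i - x$i) *\<^sub>R axis i 1)$j \<and> (x + (c$i - x$i) *\<^sub>R axis i 1)$j \<le> b$j" for j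
    using xb[of j] xb[of i] c by (auto simp: less_imp_le)
  moreover have "\<not> (a$i < (x + (c$i - x$i) *\<^sub>R axis i 1)$i \<and> (x + (c$i - x$i) *\<^sub>R axis i 1)$i < b$i)"
    using c by auto
  ultimately show ?thesis
    using admissible_mesh_less[OF adm] by (auto simp: bdry_h_eq mem_box_cart)
qed

lemma infdist_bdry_h_le:
  assumes adm: "admissible_mesh a b h" and x: "x \<in> Omega_h a b h"
  shows "infdist x (bdry_h a b h) \<le> x$i - a$i" "infdist x (bdry_h a b h) \<le> b$i - x$i"
proof -
  have "dist x (x + d *\<^sub>R axis i 1) = \<bar>d\<bar>" for d
    by (simp add: dist_norm)
  moreover have "a$i < x$i" "x$i < b$i"
    using x by (auto simp: Omega_h_def mem_box_cart)
  ultimately show "infdist x (bdry_h a b h) \<le> x$i - a$i" "infdist x (bdry_h a b h) \<le> b$i - x$i"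
    using infdist_le[OF bdry_h_axis_projection[OF adm x, of a i], of x]
          infdist_le[OF bdry_h_axis_projection[OF adm x, of b i], of x] by auto
qed

lemma sum_phi1_le_volume:
  assumes adm: "admissible_mesh a b h"
  shows "(\<Sum>x\<in>Omega_h a b h. phi1 a b x * (\<Prod>i\<in>UNIV. h$i)) \<le> (\<Prod>i\<in>UNIV. b$i - a$i)"
proof -
  have "0 \<le> (\<Prod>i\<in>UNIV. h$i)"
    using admissible_mesh_pos[OF adm] by (intro prod_nonneg) (auto intro: less_imp_le)
  then have "(\<Sum>x\<in>Omega_h a b h. phi1 a b x * (\<Prod>i\<in>UNIV. h$i)) \<le> (\<Sum>x\<in>Omega_h a b h. \<Prod>i\<in>UNIV. h$i)"
    using abs_phi1_le_1 by (intro sum_mono mult_left_le_one_le) (auto simp: abs_le_iff phi1_pos_Omega_h less_imp_le)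
  also have "\<dots> \<le> (\<Prod>i\<in>UNIV. b$i - a$i)"
    using finite_Omega_h_card_le(2)[OF adm] by simp
  finally show ?thesis .
qed

lemma normalised_phi1_ge_dist_power:
  fixes x :: "real^'n"
  assumes adm: "admissible_mesh a b h" and t: "0 < t"
    and norm: "(\<Sum>y\<in>Omega_h a b h. t * phi1 a b y * (\<Prod>i\<in>UNIV. h$i)) = 1"
    and x: "x \<in> Omega_h a b h"
  shows "t * phi1 a b x \<ge> 2 ^ CARD('n) / (\<Prod>i\<in>UNIV. b$i - a$i)^2
                           * (infdist x (bdry_h a b h)) ^ CARD('n)"
proof -
  let ?V = "\<Prod>i\<in>UNIV. b$i - a$i"
  let ?d = "infdist x (bdry_h a b h)"
  have V: "0 < ?V"
    using admissible_mesh_less[OF adm] by (intro prod_pos) auto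
  have "1 = t * (\<Sum>y\<in>Omega_h a b h. phi1 a b y * (\<Prod>i\<in>UNIV. h$i))"
    using norm by (simp add: sum_distrib_left mult.assoc)
  also have "\<dots> \<le> t * ?V"
    using sum_phi1_le_volume[OF adm] t by (intro mult_left_mono) auto
  finally have t_ge: "1 / ?V \<le> t"
    using V by (simp add: divide_le_eq mult.commute)
  have phi_ge: "(2 * ?d) ^ CARD('n) / ?V \<le> phi1 a b x"
    using x infdist_bdry_h_le[OF adm x] infdist_nonneg
    by (intro phi1_ge_power) (auto simp: Omega_h_def)
  have "1 / ?V * ((2 * ?d) ^ CARD('n) / ?V) \<le> t * phi1 a b x"
    using t_ge phi_ge t V infdist_nonneg[of x "bdry_h a b h"] by (intro mult_mono) auto
  then show ?thesis
    by (simp add: power_mult_distrib power2_eq_square)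
qed

theorem mainTheorem4:
  fixes a b h :: "real^'n"
  assumes "admissible_mesh a b h"
  shows "first_simple_eigen a b h
           (\<Sum>i\<in>UNIV. 4 / (h$i)^2 * (sin (pi * h$i / (2 * (b$i - a$i))))^2) (phi1 a b)
       \<and> (\<Sum>i\<in>UNIV. 4 / (h$i)^2 * (sin (pi * h$i / (2 * (b$i - a$i))))^2)
           < (\<Sum>i\<in>UNIV. pi^2 / (b$i - a$i)^2)
       \<and> (\<forall>x\<in>Omega_h a b h. phi1 a b x > 0)
       \<and> (\<forall>t>0. (\<Sum>x\<in>Omega_h a b h. t * phi1 a b x * (\<Prod>i\<in>UNIV. h$i)) = 1 \<longrightarrow>
            (\<forall>x\<in>Omega_h a b h.
               t * phi1 a b x \<ge> 2 ^ CARD('n) / (\<Prod>i\<in>UNIV. b$i - a$i)^2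
                                  * (infdist x (bdry_h a b h)) ^ CARD('n)))"
proof (intro conjI)
  have "dir_eigenfun a b h (disc_lambda1 a b h) (phi1 a b)"
    unfolding dir_eigenfun_def
  proof (intro conjI ballI bexI)
    show "phi1 a b (a + h) \<noteq> 0"
      using phi1_pos_Omega_h[OF Omega_h_corner[OF assms]] by simp
  qed (simp_all add: phi1_bdry_h phi1_disc_lap Omega_h_corner[OF assms])
  then show "first_simple_eigen a b h (disc_lambda1 a b h) (phi1 a b)"
    using disc_lambda1_le_eigenvalue[OF assms] disc_lambda1_simple[OF assms]
    by (auto simp: first_simple_eigen_def dir_eigenvalue_def)
  show "disc_lambda1 a b h < (\<Sum>i\<in>UNIV. pi^2 / (b$i - a$i)^2)"
    by (rule disc_lambda1_less[OF assms])
  show "\<forall>x\<in>Omega_h a b h. phi1 a b x > 0"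
    using phi1_pos_Omega_h by blast
  show "\<forall>t>0. (\<Sum>x\<in>Omega_h a b h. t * phi1 a b x * (\<Prod>i\<in>UNIV. h$i)) = 1 \<longrightarrow>
          (\<forall>x\<in>Omega_h a b h. t * phi1 a b x \<ge> 2 ^ CARD('n) / (\<Prod>i\<in>UNIV. b$i - a$i)^2
                                                 * (infdist x (bdry_h a b h)) ^ CARD('n))"
    using normalised_phi1_ge_dist_power[OF assms] by blast
qed

end
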